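(* Let $A$ be an $n\times n$ row substochastic matrix with at most one positive entry in each row. (1) If $A$ has an even number $2t$ of positive entries, then there is a listing $x_1,\dots,x_{2t}$ of these positive entries (each entry listed exactly once) such that $$\operatorname{per}(I-A)\le (1+x_1x_2)(1+x_3x_4)\cdots(1+x_{2t-1}x_{2t}).$$ (2) If $A$ has an odd number $2t+1$ of positive entries, then there is a listing $x_1,\dots,x_{2t+1}$ of these positive entries such that $$\operatorname{per}(I-A)< (1+x_1x_2)(1+x_3x_4)\cdots(1+x_{2t-1}x_{2t})\Big(1+\frac{x_{2t+1}^2}{4}\Big).$$
   Context: An $n\times n$ matrix is row substochastic if all its entries are nonnegative and each row sum is at most $1$. The permanent is $\operatorname{per}(M)=\sum_{\pi\in S_n}\prod_i m_{i\pi(i)}$, and $I$ is the identity matrix. Empty products equal $1$. *)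

theory Defs
  imports Complex_Main "HOL-Combinatorics.Permutations"
begin

text \<open>Square matrices of size n are functions nat => nat => real, indexed by i, j < n.\<close>

definition per :: "nat \<Rightarrow> (nat \<Rightarrow> nat \<Rightarrow> real) \<Rightarrow> real" where
  "per n M = (\<Sum>p \<in> {p. p permutes {..<n}}. \<Prod>i<n. M i (p i))"

definition idm :: "nat \<Rightarrow> nat \<Rightarrow> real" where
  "idm i j = (if i = j then 1 else 0)"

definition row_substochastic :: "nat \<Rightarrow> (nat \<Rightarrow> nat \<Rightarrow> real) \<Rightarrow> bool" where
  "row_substochastic n A \<longleftrightarrow>
     (\<forall>i<n. \<forall>j<n. 0 \<le> A i j) \<and> (\<forall>i<n. (\<Sum>j<n. A i j) \<le> 1)"

definition pos_entries :: "nat \<Rightarrow> (nat \<Rightarrow> nat \<Rightarrow> real) \<Rightarrow> (nat \<times> nat) set" where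
  "pos_entries n A = {(i, j). i < n \<and> j < n \<and> 0 < A i j}"

definition pair_prod :: "(nat \<Rightarrow> nat \<Rightarrow> real) \<Rightarrow> (nat \<times> nat) list \<Rightarrow> nat \<Rightarrow> real" where
  "pair_prod A ps t = (\<Prod>k<t. 1 + A (fst (ps ! (2*k))) (snd (ps ! (2*k)))
                                  * A (fst (ps ! (2*k+1))) (snd (ps ! (2*k+1))))"

end

theory Submission
  imports Defs "HOL-Combinatorics.Orbits"
begin

text \<open>Since each row of A has at most one positive entry, the positive entries form the graph of a
  partial map g. If no positive entry leads from a set T of indices out of T, then I - A is block
  triangular and its permanent factors over T and its complement. A row without positive entry
  splits off with factor 1. Otherwise g has a cycle C; on C only the identity and g itself
  contribute to the permanent, which is therefore 1 + (-1)^|C| times the product of the cycle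
  entries. For odd |C| this lies in [0, 1]; for even |C| it is at most 1 + x y for two consecutive
  entries x, y of C, which become one pair of the listing. The unused positive entries are listed
  last: every further pair factor is at least 1, and in the odd case 1 + x^2/4 > 1.\<close>

definition per_on :: "'a set \<Rightarrow> ('a \<Rightarrow> 'a \<Rightarrow> 'b::comm_semiring_1) \<Rightarrow> 'b" where
  "per_on S M = (\<Sum>p \<in> {p. p permutes S}. \<Prod>i\<in>S. M i (p i))"

lemma per_eq_per_on: "per n M = per_on {..<n} M"
  by (simp add: per_def per_on_def)

lemma per_on_singleton: "per_on {i} M = M i i"
  by (simp add: per_on_def)

lemma permutes_compose_block:
  assumes p: "p permutes T" and q: "q permutes (S - T)"
  shows "p \<circ> q permutes S \<union> T" "x \<in> T \<Longrightarrow> (p \<circ> q) x = p x" "x \<notin> T \<Longrightarrow> (p \<circ> q) x = q x"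
proof -
  show "p \<circ> q permutes S \<union> T"
    by (rule permutes_compose[OF permutes_subset[OF q] permutes_subset[OF p]]) auto
  show "x \<in> T \<Longrightarrow> (p \<circ> q) x = p x"
    using q by (simp add: permutes_not_in)
  assume "x \<notin> T"
  then have "q x \<notin> T"
    using q permutes_in_image[OF q] by (cases "x \<in> S") (auto simp: permutes_not_in)
  then show "(p \<circ> q) x = q x"
    using p by (simp add: permutes_not_in)
qed

lemma restrict_id_compose_block:
  assumes p: "p permutes T" and q: "q permutes (S - T)"
  shows "restrict_id (p \<circ> q) T = p" "restrict_id (p \<circ> q) (S - T) = q"
proof -
  have "restrict_id (p \<circ> q) T x = p x" for x
    using permutes_compose_block(2)[OF p q] permutes_not_in[OF p] by (cases "x \<in> T") simp_all
  then show "restrict_id (p \<circ> q) T = p"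
    by (simp add: fun_eq_iff)
  have "restrict_id (p \<circ> q) (S - T) x = q x" for x
    using permutes_compose_block(3)[OF p q] permutes_not_in[OF q] by (cases "x \<in> S - T") auto
  then show "restrict_id (p \<circ> q) (S - T) = q"
    by (simp add: fun_eq_iff)
qed

lemma permutes_restrict_id_block:
  assumes fin: "finite S" and TS: "T \<subseteq> S" and p: "p permutes S" and pT: "p ` T \<subseteq> T"
  shows "restrict_id p T permutes T" "restrict_id p (S - T) permutes (S - T)"
    "restrict_id p T \<circ> restrict_id p (S - T) = p"
proof -
  have inj: "inj_on p X" for X
    using permutes_inj[OF p] by (simp add: inj_on_def inj_def)
  have imgT: "p ` T = T"
    using endo_inj_surj[OF finite_subset[OF TS fin] pT inj] .
  have imgST: "p ` (S - T) = S - T"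
    using inj_on_image_set_diff[OF inj[of S] _ TS] permutes_image[OF p] imgT by simp
  show "restrict_id p T permutes T" "restrict_id p (S - T) permutes (S - T)"
    using imgT imgST inj by (simp_all add: permutes_restrict_id bij_betw_def)
  have "restrict_id p T (restrict_id p (S - T) x) = p x" for x
  proof (cases "x \<in> S - T")
    case True
    then have "p x \<notin> T"
      using imgST by blast
    then show ?thesis
      using True by simp
  next
    case False
    then show ?thesis
      using permutes_not_in[OF p, of x] by (cases "x \<in> T") auto
  qed
  then show "restrict_id p T \<circ> restrict_id p (S - T) = p"
    by (simp add: fun_eq_iff)
qed

lemma bij_betw_compose_block_permutes:
  assumes "finite S" "T \<subseteq> S"
  shows "bij_betw (\<lambda>pq. fst pq \<circ> snd pq) ({p. p permutes T} \<times> {q. q permutes (S - T)})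
           {p. p permutes S \<and> p ` T \<subseteq> T}"
proof (rule bij_betwI[where g = "\<lambda>p. (restrict_id p T, restrict_id p (S - T))"])
  show "(\<lambda>pq. fst pq \<circ> snd pq)
      \<in> {p. p permutes T} \<times> {q. q permutes (S - T)} \<rightarrow> {p. p permutes S \<and> p ` T \<subseteq> T}"
  proof (rule Pi_I)
    fix pq assume "pq \<in> {p. p permutes T} \<times> {q. q permutes (S - T)}"
    then obtain p q where pq: "pq = (p, q)" "p permutes T" "q permutes (S - T)"
      by auto
    have "p \<circ> q permutes S"
      using permutes_compose_block(1)[OF pq(2,3)] Un_absorb2[OF assms(2)] by simp
    moreover have "(p \<circ> q) ` T \<subseteq> T"
      using permutes_compose_block(2)[OF pq(2,3)] permutes_in_image[OF pq(2)] by auto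
    ultimately show "fst pq \<circ> snd pq \<in> {p. p permutes S \<and> p ` T \<subseteq> T}"
      using pq(1) by simp
  qed
  show "(\<lambda>p. (restrict_id p T, restrict_id p (S - T)))
      \<in> {p. p permutes S \<and> p ` T \<subseteq> T} \<rightarrow> {p. p permutes T} \<times> {q. q permutes (S - T)}"
    using permutes_restrict_id_block[OF assms] by blast
  show "(restrict_id (fst pq \<circ> snd pq) T, restrict_id (fst pq \<circ> snd pq) (S - T)) = pq"
    if "pq \<in> {p. p permutes T} \<times> {q. q permutes (S - T)}" for pq
    using that restrict_id_compose_block by force
  show "fst (restrict_id p T, restrict_id p (S - T)) \<circ> snd (restrict_id p T, restrict_id p (S - T)) = p"
    if "p \<in> {p. p permutes S \<and> p ` T \<subseteq> T}" for p
    using that permutes_restrict_id_block(3)[OF assms] by simp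
qed

lemma per_on_block_triangular:
  assumes fin: "finite S" and TS: "T \<subseteq> S" and zero: "\<forall>i\<in>T. \<forall>j\<in>S - T. M i j = 0"
  shows "per_on S M = per_on T M * per_on (S - T) M"
proof -
  define F where "F p = (\<Prod>i\<in>S. M i (p i))" for p
  have "per_on S M = sum F {p. p permutes S \<and> p ` T \<subseteq> T}"
    unfolding per_on_def F_def[symmetric]
  proof (rule sum.mono_neutral_right)
    show "\<forall>p\<in>{p. p permutes S} - {p. p permutes S \<and> p ` T \<subseteq> T}. F p = 0"
    proof
      fix p assume "p \<in> {p. p permutes S} - {p. p permutes S \<and> p ` T \<subseteq> T}"
      then obtain x where p: "p permutes S" and x: "x \<in> T" "p x \<notin> T" by auto
      then have "M x (p x) = 0"
        using zero permutes_in_image[OF p] TS by blast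
      then show "F p = 0"
        unfolding F_def using fin x TS by (intro prod_zero) auto
    qed
  qed (use fin in \<open>auto simp: finite_permutations\<close>)
  also have "\<dots> = (\<Sum>(p, q) \<in> {p. p permutes T} \<times> {q. q permutes (S - T)}. F (p \<circ> q))"
    using sum.reindex_bij_betw[OF bij_betw_compose_block_permutes[OF fin TS], of F]
    by (simp add: case_prod_unfold)
  also have "\<dots> = (\<Sum>(p, q) \<in> {p. p permutes T} \<times> {q. q permutes (S - T)}.
                    (\<Prod>i\<in>T. M i (p i)) * (\<Prod>i\<in>S - T. M i (q i)))"
  proof (rule sum.cong, simp, clarify)
    fix p q assume pq: "p permutes T" "q permutes (S - T)"
    have "F (p \<circ> q) = (\<Prod>i\<in>T. M i ((p \<circ> q) i)) * (\<Prod>i\<in>S - T. M i ((p \<circ> q) i))"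
      unfolding F_def using prod.subset_diff[OF TS fin] by (simp add: mult.commute)
    also have "\<dots> = (\<Prod>i\<in>T. M i (p i)) * (\<Prod>i\<in>S - T. M i (q i))"
      using permutes_compose_block[OF pq] by (intro arg_cong2[where f = "(*)"] prod.cong) auto
    finally show "F (p \<circ> q) = (\<Prod>i\<in>T. M i (p i)) * (\<Prod>i\<in>S - T. M i (q i))" .
  qed
  also have "\<dots> = per_on T M * per_on (S - T) M"
    unfolding per_on_def sum_product sum.cartesian_product by (simp add: case_prod_beta)
  finally show ?thesis .
qed

lemma orbit_subset_invariant:
  assumes "g ` S \<subseteq> S" "c \<in> S"
  shows "orbit g c \<subseteq> S"
proof
  fix x assume "x \<in> orbit g c"
  then show "x \<in> S"
    by induction (use assms in auto)
qed

lemma finite_invariant_set_has_periodic_point: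
  assumes "finite S" "S \<noteq> {}" "g ` S \<subseteq> S"
  shows "\<exists>c\<in>S. c \<in> orbit g c"
proof -
  obtain a where a: "a \<in> S" using assms(2) by auto
  have iter: "(g ^^ k) a \<in> S" for k
    by (induction k) (use assms(3) a in auto)
  have "\<not> inj_on (\<lambda>k. (g ^^ k) a) {..card S}"
  proof
    assume "inj_on (\<lambda>k. (g ^^ k) a) {..card S}"
    then have "card ((\<lambda>k. (g ^^ k) a) ` {..card S}) = Suc (card S)"
      by (simp add: card_image)
    moreover have "card ((\<lambda>k. (g ^^ k) a) ` {..card S}) \<le> card S"
      using iter assms(1) by (intro card_mono) auto
    ultimately show False by simp
  qed
  then obtain k l where "k \<noteq> l" "(g ^^ k) a = (g ^^ l) a"
    unfolding inj_on_def by blast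
  then obtain k l where kl: "k < l" "(g ^^ k) a = (g ^^ l) a"
    by (metis linorder_neqE_nat)
  define c where "c = (g ^^ k) a"
  have "(g ^^ (l - k)) c = (g ^^ (l - k + k)) a"
    unfolding c_def by (simp add: funpow_add)
  also have "\<dots> = c"
    using kl by (simp add: c_def)
  finally have "c \<in> orbit g c"
    unfolding orbit_altdef mem_Collect_eq using kl(1) by (intro exI[of _ "l - k"]) simp
  then show ?thesis
    using iter c_def by blast
qed

lemma cyclic_on_bij_betw:
  assumes "cyclic_on g C"
  shows "bij_betw g C C"
proof -
  have "C \<subseteq> g ` C"
  proof
    fix y assume y: "y \<in> C"
    have C: "orbit g y = C"
      using assms y by (rule orbit_cyclic_eq3)
    with y have "y \<in> orbit g y"
      by simp
    then show "y \<in> g ` C"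
    proof (cases rule: orbit.cases)
      case base
      then show ?thesis using y by blast
    next
      case (step z)
      then show ?thesis using C by blast
    qed
  qed
  moreover have "g ` C \<subseteq> C"
    using cyclic_on_inI[OF assms] by blast
  ultimately have "g ` C = C"
    by blast
  then show ?thesis
    using finite_cyclic_on[OF assms] by (simp add: bij_betw_def eq_card_imp_inj_on)
qed

text \<open>If p moves y to g y, injectivity forbids p to fix g y, so p moves g y forward as well;
  around the cycle this reaches every point.\<close>

lemma cyclic_on_permutes_along:
  assumes cyc: "cyclic_on g C" and p: "p permutes C" and card: "card C \<noteq> 1"
    and along: "\<forall>x\<in>C. p x = x \<or> p x = g x"
  shows "p = id \<or> p = restrict_id g C"
proof (cases "\<exists>x\<in>C. p x = g x")
  case False
  then have "p x = x" for x
    using along p by (cases "x \<in> C") (auto simp: permutes_not_in)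
  then show ?thesis by (simp add: fun_eq_iff)
next
  case True
  then obtain x where x: "x \<in> C" "p x = g x" by auto
  have gC: "g y \<in> C" if "y \<in> C" for y
    using cyc that by (rule cyclic_on_inI)
  have moved: "g ` {y\<in>C. p y = g y} \<subseteq> {y\<in>C. p y = g y}"
  proof clarify
    fix y assume y: "y \<in> C" "p y = g y"
    have "p (g y) \<noteq> g y"
    proof
      assume "p (g y) = g y"
      then have "g y = y"
        using y permutes_inj[OF p] by (simp add: inj_def)
      then show False
        using eq_on_cyclic_on_iff1[OF cyc y(1)] card by blast
    qed
    then show "g y \<in> C \<and> p (g y) = g (g y)"
      using along gC y by auto
  qed
  have "C \<subseteq> {y\<in>C. p y = g y}"
    using orbit_subset_invariant[OF moved] x orbit_cyclic_eq3[OF cyc x(1)] by blast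
  then have "p y = restrict_id g C y" for y
    using p by (cases "y \<in> C") (auto simp: permutes_not_in)
  then show ?thesis by (simp add: fun_eq_iff)
qed

lemma per_on_cycle_support:
  assumes cyc: "cyclic_on g C" and card: "card C \<noteq> 1"
    and supp: "\<forall>i\<in>C. \<forall>j\<in>C. j \<noteq> i \<longrightarrow> j \<noteq> g i \<longrightarrow> M i j = 0"
  shows "per_on C M = (\<Prod>i\<in>C. M i i) + (\<Prod>i\<in>C. M i (g i))"
proof -
  define F where "F p = (\<Prod>i\<in>C. M i (p i))" for p
  have fin: "finite C"
    using finite_cyclic_on[OF cyc] .
  have restrict_permutes: "restrict_id g C permutes C"
    by (rule permutes_restrict_id[OF cyclic_on_bij_betw[OF cyc]])
  have id_ne_restrict: "id \<noteq> restrict_id g C"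
  proof -
    obtain c where c: "c \<in> C"
      using cyc by (auto simp: cyclic_on_def)
    obtain "g c = c \<longleftrightarrow> card C = 1"
      by (rule eq_on_cyclic_on_iff1[OF cyc c])
    then show ?thesis
      using c card by (metis id_apply restrict_id_simps(1))
  qed
  have vanish: "F p = 0" if p: "p permutes C" and ne: "p \<noteq> id" "p \<noteq> restrict_id g C" for p
  proof -
    obtain x where "x \<in> C" "p x \<noteq> x" "p x \<noteq> g x"
      using cyclic_on_permutes_along[OF cyc p card] ne by blast
    moreover have "p x \<in> C"
      using permutes_in_image[OF p] \<open>x \<in> C\<close> by simp
    ultimately have "M x (p x) = 0"
      using supp by blast
    then show "F p = 0"
      unfolding F_def using fin \<open>x \<in> C\<close> by (intro prod_zero) auto
  qed
  have "per_on C M = sum F {id, restrict_id g C}"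
    unfolding per_on_def F_def[symmetric]
  proof (rule sum.mono_neutral_right)
    show "finite {p. p permutes C}"
      using fin by (rule finite_permutations)
    show "{id, restrict_id g C} \<subseteq> {p. p permutes C}"
      using restrict_permutes permutes_id by blast
    show "\<forall>p\<in>{p. p permutes C} - {id, restrict_id g C}. F p = 0"
      using vanish by blast
  qed
  also have "\<dots> = F id + F (restrict_id g C)"
    using id_ne_restrict by simp
  also have "F (restrict_id g C) = (\<Prod>i\<in>C. M i (g i))"
    unfolding F_def by (intro prod.cong) simp_all
  finally show ?thesis
    by (simp add: F_def)
qed

lemma per_on_cycle:
  fixes A :: "nat \<Rightarrow> nat \<Rightarrow> real"
  assumes cyc: "cyclic_on g C" and supp: "\<forall>i\<in>C. \<forall>j\<in>C. j \<noteq> g i \<longrightarrow> A i j = 0"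
  shows "per_on C (\<lambda>i j. idm i j - A i j) = 1 + (-1) ^ card C * (\<Prod>i\<in>C. A i (g i))"
proof (cases "card C = 1")
  case True
  then obtain c where C: "C = {c}"
    by (auto simp: card_Suc_eq)
  then have "g c = c"
    using cyc cyclic_on_inI by fastforce
  then show ?thesis
    by (simp add: C per_on_singleton idm_def)
next
  case card: False
  have moves: "i \<noteq> g i" if i: "i \<in> C" for i
  proof -
    obtain "g i = i \<longleftrightarrow> card C = 1"
      by (rule eq_on_cyclic_on_iff1[OF cyc i])
    then show ?thesis
      using card by auto
  qed
  have "per_on C (\<lambda>i j. idm i j - A i j)
      = (\<Prod>i\<in>C. idm i i - A i i) + (\<Prod>i\<in>C. idm i (g i) - A i (g i))"
    by (rule per_on_cycle_support[OF cyc card]) (use supp in \<open>simp add: idm_def\<close>)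
  also have "(\<Prod>i\<in>C. idm i i - A i i) = 1"
    using supp moves by (auto simp: idm_def intro!: prod.neutral)
  also have "(\<Prod>i\<in>C. idm i (g i) - A i (g i)) = (\<Prod>i\<in>C. - A i (g i))"
    using moves by (intro prod.cong) (auto simp: idm_def)
  also have "(\<Prod>i\<in>C. - A i (g i)) = (-1) ^ card C * (\<Prod>i\<in>C. A i (g i))"
    by (simp add: prod_uminus)
  finally show ?thesis .
qed

lemma per_on_cycle_bounds:
  fixes A :: "nat \<Rightarrow> nat \<Rightarrow> real"
  assumes cyc: "cyclic_on g C" and supp: "\<forall>i\<in>C. \<forall>j\<in>C. j \<noteq> g i \<longrightarrow> A i j = 0"
    and bnd: "\<forall>i\<in>C. \<forall>j\<in>C. 0 \<le> A i j \<and> A i j \<le> 1" and c: "c \<in> C"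
  shows "0 \<le> per_on C (\<lambda>i j. idm i j - A i j)"
    and "odd (card C) \<Longrightarrow> per_on C (\<lambda>i j. idm i j - A i j) \<le> 1"
    and "even (card C) \<Longrightarrow> per_on C (\<lambda>i j. idm i j - A i j) \<le> 1 + A c (g c) * A (g c) (g (g c))"
proof -
  define W where "W = (\<Prod>i\<in>C. A i (g i))"
  have fin: "finite C" using finite_cyclic_on[OF cyc] .
  have gC: "g i \<in> C" if "i \<in> C" for i
    using cyc that by (rule cyclic_on_inI)
  have W: "0 \<le> W" "W \<le> 1"
    unfolding W_def using bnd gC by (auto intro!: prod_nonneg prod_le_1)
  note per = per_on_cycle[OF cyc supp, folded W_def]
  show "0 \<le> per_on C (\<lambda>i j. idm i j - A i j)"
    using W by (cases "even (card C)") (simp_all add: per)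
  show "odd (card C) \<Longrightarrow> per_on C (\<lambda>i j. idm i j - A i j) \<le> 1"
    using W by (simp add: per)
  assume even: "even (card C)"
  obtain "g c = c \<longleftrightarrow> card C = 1"
    by (rule eq_on_cyclic_on_iff1[OF cyc c])
  with even have "g c \<noteq> c"
    by auto
  then have "W = A c (g c) * (A (g c) (g (g c)) * (\<Prod>i\<in>C - {c} - {g c}. A i (g i)))"
    unfolding W_def using fin c gC by (simp add: prod.remove[OF fin c] prod.remove[of "C - {c}" "g c"])
  also have "\<dots> \<le> A c (g c) * A (g c) (g (g c))"
  proof -
    have "0 \<le> A c (g c)" "0 \<le> A (g c) (g (g c))"
      using bnd c gC by auto
    moreover have "(\<Prod>i\<in>C - {c} - {g c}. A i (g i)) \<le> 1"
      using bnd gC by (auto intro!: prod_le_1)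
    ultimately show ?thesis
      by (intro mult_left_mono mult_left_le) auto
  qed
  finally show "per_on C (\<lambda>i j. idm i j - A i j) \<le> 1 + A c (g c) * A (g c) (g (g c))"
    using even by (simp add: per)
qed

lemma per_on_closed_block:
  fixes A :: "nat \<Rightarrow> nat \<Rightarrow> real"
  assumes "finite S" "T \<subseteq> S" "\<forall>i\<in>T. \<forall>j\<in>S - T. A i j = 0"
  shows "per_on S (\<lambda>i j. idm i j - A i j)
           = per_on T (\<lambda>i j. idm i j - A i j) * per_on (S - T) (\<lambda>i j. idm i j - A i j)"
proof (rule per_on_block_triangular[OF assms(1,2)], intro ballI)
  fix i j assume "i \<in> T" "j \<in> S - T"
  then show "idm i j - A i j = 0"
    using assms(3) by (auto simp: idm_def)
qed

lemma positive_entries_contain_cycle: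
  fixes A :: "nat \<Rightarrow> nat \<Rightarrow> real"
  assumes "finite S" "S \<noteq> {}" and ex: "\<forall>i\<in>S. \<exists>j\<in>S. 0 < A i j"
    and uniq: "\<forall>i\<in>S. \<forall>j\<in>S. \<forall>j'\<in>S. 0 < A i j \<longrightarrow> 0 < A i j' \<longrightarrow> j = j'"
  obtains g C where "cyclic_on g C" "C \<subseteq> S" "\<forall>i\<in>C. \<forall>j\<in>S. 0 < A i j \<longleftrightarrow> j = g i"
proof -
  define g where "g i = (SOME j. j \<in> S \<and> 0 < A i j)" for i
  have g: "g i \<in> S" "0 < A i (g i)" if "i \<in> S" for i
    using someI_ex[of "\<lambda>j. j \<in> S \<and> 0 < A i j"] ex that unfolding g_def by auto
  then have "g ` S \<subseteq> S" by auto
  then obtain c where c: "c \<in> S" "c \<in> orbit g c"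
    using finite_invariant_set_has_periodic_point[OF assms(1,2)] by blast
  show thesis
  proof
    show "cyclic_on g (orbit g c)"
      by (rule cyclic_on_singleI[OF c(2) refl])
    show "orbit g c \<subseteq> S"
      by (rule orbit_subset_invariant[OF \<open>g ` S \<subseteq> S\<close> c(1)])
    show "\<forall>i\<in>orbit g c. \<forall>j\<in>S. 0 < A i j \<longleftrightarrow> j = g i"
    proof (intro ballI)
      fix i j assume "i \<in> orbit g c" "j \<in> S"
      then have "i \<in> S"
        using \<open>orbit g c \<subseteq> S\<close> by blast
      then show "0 < A i j \<longleftrightarrow> j = g i"
        using g[of i] uniq \<open>j \<in> S\<close> by blast
    qed
  qed
qed

lemma pair_prod_0 [simp]: "pair_prod A L 0 = 1"
  by (simp add: pair_prod_def)

lemma pair_prod_Suc: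
  "pair_prod A L (Suc t) = pair_prod A L t
     * (1 + A (fst (L ! (2*t))) (snd (L ! (2*t))) * A (fst (L ! (2*t+1))) (snd (L ! (2*t+1))))"
  by (simp add: pair_prod_def)

lemma pair_prod_append:
  "2 * t \<le> length L \<Longrightarrow> pair_prod A (L @ R) t = pair_prod A L t"
  unfolding pair_prod_def by (intro prod.cong) (auto simp: nth_append)

lemma one_le_pair_prod:
  assumes "2 * t \<le> length L" "\<forall>x\<in>set L. 0 \<le> A (fst x) (snd x)"
  shows "1 \<le> pair_prod A L t"
  unfolding pair_prod_def
proof (rule prod_ge_1)
  fix k assume "k \<in> {..<t}"
  then have "L ! (2*k) \<in> set L" "L ! (2*k+1) \<in> set L"
    using assms(1) by auto
  then show "1 \<le> 1 + A (fst (L ! (2*k))) (snd (L ! (2*k))) * A (fst (L ! (2*k+1))) (snd (L ! (2*k+1)))"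
    using assms(2) by simp
qed

lemma pair_prod_mono:
  assumes "m \<le> t" "2 * t \<le> length L" "\<forall>x\<in>set L. 0 \<le> A (fst x) (snd x)"
  shows "pair_prod A L m \<le> pair_prod A L t"
  using assms(1,2)
proof (induction t rule: dec_induct)
  case (step t)
  then have "L ! (2*t) \<in> set L" "L ! (2*t+1) \<in> set L"
    by auto
  then have "1 \<le> 1 + A (fst (L ! (2*t))) (snd (L ! (2*t))) * A (fst (L ! (2*t+1))) (snd (L ! (2*t+1)))"
    using assms(3) by simp
  moreover have "0 \<le> pair_prod A L t"
    using one_le_pair_prod[of t L A] step assms(3) by simp
  ultimately have "pair_prod A L t \<le> pair_prod A L (Suc t)"
    unfolding pair_prod_Suc by (simp add: mult_le_cancel_left1)
  then show ?case
    using step by simp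
qed simp

lemma pair_prod_append_pairs:
  assumes "length P = 2 * k"
  shows "pair_prod A (P @ L) (k + m) = pair_prod A P k * pair_prod A L m"
proof (induction m)
  case 0
  show ?case
    using assms by (simp add: pair_prod_append)
next
  case (Suc m)
  then show ?case
    using assms by (simp add: pair_prod_Suc nth_append algebra_simps)
qed

definition pos_entries_on :: "nat set \<Rightarrow> (nat \<Rightarrow> nat \<Rightarrow> real) \<Rightarrow> (nat \<times> nat) set" where
  "pos_entries_on S A = {(i, j). i \<in> S \<and> j \<in> S \<and> 0 < A i j}"

lemma pos_entries_eq_pos_entries_on: "pos_entries n A = pos_entries_on {..<n} A"
  by (auto simp: pos_entries_def pos_entries_on_def)

lemma pos_entries_on_mono: "S \<subseteq> S' \<Longrightarrow> pos_entries_on S A \<subseteq> pos_entries_on S' A"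
  by (auto simp: pos_entries_on_def)

lemma pos_entries_on_nonneg:
  "set L \<subseteq> pos_entries_on S A \<Longrightarrow> \<forall>x\<in>set L. 0 \<le> A (fst x) (snd x)"
  by (auto simp: pos_entries_on_def)

definition per_pair_bounded :: "nat set \<Rightarrow> (nat \<Rightarrow> nat \<Rightarrow> real) \<Rightarrow> bool" where
  "per_pair_bounded S A \<longleftrightarrow> (\<exists>L m. length L = 2 * m \<and> distinct L \<and> set L \<subseteq> pos_entries_on S A
     \<and> per_on S (\<lambda>i j. idm i j - A i j) \<le> pair_prod A L m)"

lemma per_pair_bounded_empty: "per_pair_bounded {} A"
  unfolding per_pair_bounded_def by (intro exI[of _ "[]"] exI[of _ 0]) (simp add: per_on_def)

lemma per_pair_bounded_closed_block:
  fixes A :: "nat \<Rightarrow> nat \<Rightarrow> real"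
  assumes fin: "finite S" and TS: "T \<subseteq> S" and closed: "\<forall>i\<in>T. \<forall>j\<in>S - T. A i j = 0"
    and rest: "per_pair_bounded (S - T) A"
    and P: "length P = 2 * k" "distinct P" "set P \<subseteq> pos_entries_on T A"
    and per_T: "0 \<le> per_on T (\<lambda>i j. idm i j - A i j)" "per_on T (\<lambda>i j. idm i j - A i j) \<le> pair_prod A P k"
  shows "per_pair_bounded S A"
proof -
  define M where "M i j = idm i j - A i j" for i j
  obtain L m where L: "length L = 2 * m" "distinct L" "set L \<subseteq> pos_entries_on (S - T) A"
      "per_on (S - T) M \<le> pair_prod A L m"
    using rest unfolding per_pair_bounded_def M_def by blast
  have "per_on S M = per_on T M * per_on (S - T) M"
    unfolding M_def by (rule per_on_closed_block[OF fin TS closed])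
  also have "\<dots> \<le> per_on T M * pair_prod A L m"
    using L(4) per_T(1) unfolding M_def by (rule mult_left_mono)
  also have "\<dots> \<le> pair_prod A P k * pair_prod A L m"
  proof (rule mult_right_mono)
    show "per_on T M \<le> pair_prod A P k"
      using per_T(2) unfolding M_def .
    show "0 \<le> pair_prod A L m"
      using one_le_pair_prod[OF _ pos_entries_on_nonneg[OF L(3)]] L(1) by fastforce
  qed
  also have "\<dots> = pair_prod A (P @ L) (k + m)"
    using P(1) by (rule pair_prod_append_pairs[symmetric])
  finally have "per_on S M \<le> pair_prod A (P @ L) (k + m)" .
  moreover have "set P \<inter> set L = {}"
    using P(3) L(3) by (auto simp: pos_entries_on_def)
  moreover have "set (P @ L) \<subseteq> pos_entries_on S A"
    using P(3) L(3) pos_entries_on_mono[of T S A] pos_entries_on_mono[of "S - T" S A] TS by auto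
  ultimately show ?thesis
    unfolding per_pair_bounded_def M_def using P(1,2) L(1,2)
    by (intro exI[of _ "P @ L"] exI[of _ "k + m"]) simp
qed

lemma per_pair_bounded_split_cycle:
  fixes A :: "nat \<Rightarrow> nat \<Rightarrow> real"
  assumes fin: "finite S" and bnd: "\<forall>i\<in>S. \<forall>j\<in>S. 0 \<le> A i j \<and> A i j \<le> 1"
    and cyc: "cyclic_on g C" and CS: "C \<subseteq> S" and pos: "\<forall>i\<in>C. \<forall>j\<in>S. 0 < A i j \<longleftrightarrow> j = g i"
    and rest: "per_pair_bounded (S - C) A"
  shows "per_pair_bounded S A"
proof -
  obtain c where c: "c \<in> C"
    using cyc by (auto simp: cyclic_on_def)
  have gC: "g i \<in> C" if "i \<in> C" for i
    using cyc that by (rule cyclic_on_inI)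
  have off_graph: "A i j = 0" if "i \<in> C" "j \<in> S" "j \<noteq> g i" for i j
  proof -
    have "0 \<le> A i j"
      using bnd that CS by blast
    moreover have "\<not> 0 < A i j"
      using pos that by blast
    ultimately show ?thesis by simp
  qed
  have closed: "\<forall>i\<in>C. \<forall>j\<in>S - C. A i j = 0"
    using off_graph gC by auto
  have supp: "\<forall>i\<in>C. \<forall>j\<in>C. j \<noteq> g i \<longrightarrow> A i j = 0"
    using off_graph CS by blast
  have bndC: "\<forall>i\<in>C. \<forall>j\<in>C. 0 \<le> A i j \<and> A i j \<le> 1"
    using bnd CS by blast
  note bounds = per_on_cycle_bounds[OF cyc supp bndC c]
  note split = per_pair_bounded_closed_block[OF fin CS closed rest]
  show ?thesis
  proof (cases "even (card C)")
    case False
    then show ?thesis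
      using bounds(1,2) by (intro split[where P = "[]" and k = 0]) auto
  next
    case True
    obtain "g c = c \<longleftrightarrow> card C = 1"
      by (rule eq_on_cyclic_on_iff1[OF cyc c])
    with True have "c \<noteq> g c"
      by auto
    moreover have "0 < A i (g i)" if "i \<in> C" for i
      using pos that gC CS by blast
    ultimately have "set [(c, g c), (g c, g (g c))] \<subseteq> pos_entries_on C A"
      "distinct [(c, g c), (g c, g (g c))]"
      using c gC by (auto simp: pos_entries_on_def)
    moreover have "per_on C (\<lambda>i j. idm i j - A i j) \<le> pair_prod A [(c, g c), (g c, g (g c))] 1"
      using bounds(3)[OF True] by (simp add: pair_prod_def)
    ultimately show ?thesis
      using bounds(1) by (intro split) simp_all
  qed
qed

lemma per_pair_bounded:
  fixes A :: "nat \<Rightarrow> nat \<Rightarrow> real"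
  assumes "finite S"
    and "\<forall>i\<in>S. \<forall>j\<in>S. 0 \<le> A i j \<and> A i j \<le> 1"
    and "\<forall>i\<in>S. \<forall>j\<in>S. \<forall>j'\<in>S. 0 < A i j \<longrightarrow> 0 < A i j' \<longrightarrow> j = j'"
  shows "per_pair_bounded S A"
  using assms
proof (induction S rule: finite_psubset_induct)
  case (psubset S)
  note bnd = psubset.prems(1) and uniq = psubset.prems(2)
  have rest: "per_pair_bounded (S - T) A" if "T \<subseteq> S" "T \<noteq> {}" for T
  proof (rule psubset.IH)
    show "S - T \<subset> S"
      using that by blast
    show "\<forall>i\<in>S - T. \<forall>j\<in>S - T. 0 \<le> A i j \<and> A i j \<le> 1"
      using bnd by blast
    show "\<forall>i\<in>S - T. \<forall>j\<in>S - T. \<forall>j'\<in>S - T. 0 < A i j \<longrightarrow> 0 < A i j' \<longrightarrow> j = j'"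
      using uniq by blast
  qed
  have nonzero_pos: "0 < A i j" if "i \<in> S" "j \<in> S" "A i j \<noteq> 0" for i j
    using bnd that by (simp add: order_less_le)
  consider (empty) "S = {}" | (zero_row) i where "i \<in> S" "\<forall>j\<in>S. A i j = 0"
    | (positive_rows) "S \<noteq> {}" "\<forall>i\<in>S. \<exists>j\<in>S. 0 < A i j"
    using nonzero_pos by blast
  then show ?case
  proof cases
    case empty
    then show ?thesis
      by (simp add: per_pair_bounded_empty)
  next
    case (zero_row i)
    have "per_on {i} (\<lambda>i j. idm i j - A i j) = 1"
      using zero_row by (simp add: per_on_singleton idm_def)
    then show ?thesis
      using zero_row rest[of "{i}"]
      by (intro per_pair_bounded_closed_block[OF psubset.hyps, where T = "{i}" and P = "[]" and k = 0])
         auto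
  next
    case positive_rows
    then obtain g C where cyc: "cyclic_on g C" and CS: "C \<subseteq> S"
        and pos: "\<forall>i\<in>C. \<forall>j\<in>S. 0 < A i j \<longleftrightarrow> j = g i"
      using positive_entries_contain_cycle[OF psubset.hyps _ _ uniq] by blast
    moreover have "C \<noteq> {}"
      using cyc by (auto simp: cyclic_on_def)
    ultimately show ?thesis
      using rest by (intro per_pair_bounded_split_cycle[OF psubset.hyps bnd]) auto
  qed
qed

lemma row_substochastic_entry_bounds:
  assumes "row_substochastic n A" "i < n" "j < n"
  shows "0 \<le> A i j" "A i j \<le> 1"
proof -
  show "0 \<le> A i j"
    using assms unfolding row_substochastic_def by blast
  have "A i j \<le> (\<Sum>k<n. A i k)"
    using assms unfolding row_substochastic_def by (intro member_le_sum) auto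
  also have "\<dots> \<le> 1"
    using assms unfolding row_substochastic_def by blast
  finally show "A i j \<le> 1" .
qed

lemma positive_entry_unique:
  fixes A :: "nat \<Rightarrow> nat \<Rightarrow> real"
  assumes "card {j. j < n \<and> 0 < A i j} \<le> 1" "j < n" "j' < n" "0 < A i j" "0 < A i j'"
  shows "j = j'"
proof -
  have "finite {j. j < n \<and> 0 < A i j}"
    by simp
  moreover have "card {j. j < n \<and> 0 < A i j} \<le> Suc 0"
    using assms(1) by simp
  ultimately have "\<forall>a\<in>{j. j < n \<and> 0 < A i j}. \<forall>b\<in>{j. j < n \<and> 0 < A i j}. a = b"
    by (rule card_le_Suc0_iff_eq[THEN iffD1])
  then show ?thesis
    using assms(2-5) by blast
qed

lemma exists_listing_per_le_pair_prod:
  assumes sub: "row_substochastic n A" and one: "\<forall>i<n. card {j. j < n \<and> 0 < A i j} \<le> 1"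
  shows "\<exists>ps. distinct ps \<and> set ps = pos_entries n A
           \<and> per n (\<lambda>i j. idm i j - A i j) \<le> pair_prod A ps (length ps div 2)"
proof -
  have "\<forall>i\<in>{..<n}. \<forall>j\<in>{..<n}. 0 \<le> A i j \<and> A i j \<le> 1"
    using row_substochastic_entry_bounds[OF sub] by simp
  moreover have "\<forall>i\<in>{..<n}. \<forall>j\<in>{..<n}. \<forall>j'\<in>{..<n}. 0 < A i j \<longrightarrow> 0 < A i j' \<longrightarrow> j = j'"
  proof (intro ballI impI)
    fix i j j' assume "i \<in> {..<n}" "j \<in> {..<n}" "j' \<in> {..<n}" "0 < A i j" "0 < A i j'"
    then show "j = j'"
      using one by (intro positive_entry_unique[of n A i]) simp_all
  qed
  ultimately have "per_pair_bounded {..<n} A"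
    by (rule per_pair_bounded[OF finite_lessThan])
  then obtain L m where L: "length L = 2 * m" "distinct L" "set L \<subseteq> pos_entries n A"
      "per n (\<lambda>i j. idm i j - A i j) \<le> pair_prod A L m"
    unfolding per_pair_bounded_def pos_entries_eq_pos_entries_on per_eq_per_on by blast
  have "finite (pos_entries n A)"
    by (rule finite_subset[of _ "{..<n} \<times> {..<n}"]) (auto simp: pos_entries_def)
  then obtain R where R: "distinct R" "set R = pos_entries n A - set L"
    using finite_distinct_list[of "pos_entries n A - set L"] by auto
  define ps where "ps = L @ R"
  have ps: "distinct ps" "set ps = pos_entries n A"
    using L(2,3) R unfolding ps_def by auto
  have "pair_prod A L m = pair_prod A ps m"
    unfolding ps_def using L(1) by (simp add: pair_prod_append)
  also have "\<dots> \<le> pair_prod A ps (length ps div 2)"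
    using L(1) ps(2) by (intro pair_prod_mono) (auto simp: ps_def pos_entries_def)
  finally show ?thesis
    using L(4) ps by (intro exI[of _ ps]) simp
qed

theorem mainTheorem8:
  fixes n :: nat and A :: "nat \<Rightarrow> nat \<Rightarrow> real"
  assumes "row_substochastic n A"
    and "\<forall>i<n. card {j. j < n \<and> 0 < A i j} \<le> 1"
  shows "(\<forall>t. card (pos_entries n A) = 2*t \<longrightarrow>
            (\<exists>ps. distinct ps \<and> set ps = pos_entries n A \<and>
               per n (\<lambda>i j. idm i j - A i j) \<le> pair_prod A ps t))
       \<and> (\<forall>t. card (pos_entries n A) = 2*t + 1 \<longrightarrow>
            (\<exists>ps. distinct ps \<and> set ps = pos_entries n A \<and>
               per n (\<lambda>i j. idm i j - A i j)
                 < pair_prod A ps t * (1 + (A (fst (ps ! (2*t))) (snd (ps ! (2*t))))^2 / 4)))"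
proof -
  obtain ps where ps: "distinct ps" "set ps = pos_entries n A"
      and per_le: "per n (\<lambda>i j. idm i j - A i j) \<le> pair_prod A ps (length ps div 2)"
    using exists_listing_per_le_pair_prod[OF assms] by blast
  have len: "length ps = card (pos_entries n A)"
    using distinct_card[OF ps(1)] ps(2) by simp
  have pos: "0 < A (fst x) (snd x)" if "x \<in> set ps" for x
    using that ps(2) by (auto simp: pos_entries_def)
  show ?thesis
  proof (intro conjI allI impI)
    fix t assume "card (pos_entries n A) = 2 * t"
    then show "\<exists>ps. distinct ps \<and> set ps = pos_entries n A \<and> per n (\<lambda>i j. idm i j - A i j) \<le> pair_prod A ps t"
      using ps per_le len by (intro exI[of _ ps]) simp
  next
    fix t assume t: "card (pos_entries n A) = 2 * t + 1"
    define x where "x = A (fst (ps ! (2*t))) (snd (ps ! (2*t)))"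
    have "0 < x"
      unfolding x_def using t len by (intro pos) simp
    moreover have "1 \<le> pair_prod A ps t"
      using t len pos by (intro one_le_pair_prod) (auto simp: less_imp_le)
    ultimately have "pair_prod A ps t < pair_prod A ps t * (1 + x^2 / 4)"
      by (simp add: mult_less_cancel_left1)
    moreover have "per n (\<lambda>i j. idm i j - A i j) \<le> pair_prod A ps t"
      using per_le t len by simp
    ultimately show "\<exists>ps. distinct ps \<and> set ps = pos_entries n A \<and>
        per n (\<lambda>i j. idm i j - A i j) < pair_prod A ps t * (1 + (A (fst (ps ! (2*t))) (snd (ps ! (2*t))))^2 / 4)"
      using ps unfolding x_def by (intro exI[of _ ps]) simp
  qed
qed

end
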